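(* The matrix $A$ normalizes the group $\mathrm{H}$, that is, $A\mathrm{H}A^{-1}=\mathrm{H}$.
   Context: Let $\langle x,y\rangle=x_1y_1+\dots+x_6y_6-x_7y_7$ on $\mathbb{R}^7$, $H^6=\{x:\langle x,x\rangle=-1,x_7>0\}$, and $e_1,\dots,e_7$ the standard basis. $\Gamma^6=PO_{6,1}\mathbb{Z}$ is the group of $7\times7$ integer matrices preserving $\langle\cdot,\cdot\rangle$ and mapping $H^6$ to itself. $\mathrm{K}^6$ is the group of the $64$ matrices $\mathrm{diag}(\varepsilon_1,\dots,\varepsilon_6,1)$, $\varepsilon_i=\pm1$. Define vectors $u_1,\dots,u_{27}$: $u_i=-e_i$ for $1\le i\le 6$; $u_7,\dots,u_{21}$ are $e_a+e_b+e_7$ for the pairs $(a,b)=(1,2),(1,3),(2,3),(1,4),(2,4),(3,4),(1,5),(2,5),(3,5),(4,5),(1,6),(2,6),(3,6),(4,6),(5,6)$ in this order; $u_{22},\dots,u_{27}$ are $\sum_{i=1}^6e_i-e_c+2e_7$ for $c=6,5,4,3,2,1$ in this order. Let $R_j$ be the reflection $x\mapsto x-2\langle x,u_j\rangle u_j$. For $7\le j\le27$ let $k_j\in\mathrm{K}^6$ be the matrix with $\varepsilon_i=-1$ exactly for $i\in N_j$, where $N_7=\{2,3,5\}$, $N_8=\{1,2,3,4,5\}$, $N_9=\{3,4,5\}$, $N_{10}=\{1,2,3,5,6\}$, $N_{11}=\{1,4,6\}$, $N_{12}=\{2,3,5\}$, $N_{13}=\{3,4,5\}$, $N_{14}=\{1,2,5\}$,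 $N_{15}=\{5\}$, $N_{16}=\{2,4,6\}$, $N_{17}=\{1,2,5\}$, $N_{18}=\{2,4,6\}$, $N_{19}=\{6\}$, $N_{20}=\{1,3,4\}$, $N_{21}=\{1,2,3,5,6\}$, $N_{22}=\{1,3,4\}$, $N_{23}=\{2\}$, $N_{24}=\{1,4,6\}$, $N_{25}=\{1,2,3,4,5\}$, $N_{26}=\{4\}$, $N_{27}=\{3\}$. Let $\mathrm{H}$ be the subgroup of $\Gamma^6$ generated by all matrices $\ell R_j\ell k_j$ with $\ell\in\mathrm{K}^6$ and $7\le j\le 27$. Let $A=\begin{pmatrix}1&0&0&0&0&0&0\\0&1&0&0&1&0&-1\\0&0&0&0&0&1&0\\0&-1&0&-1&0&0&1\\0&0&1&0&0&0&0\\0&0&0&-1&-1&0&1\\0&-1&0&-1&-1&0&2\end{pmatrix}\in\Gamma^6.$ *)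

theory Defs
  imports "Jordan_Normal_Form.Matrix" "HOL-Algebra.Generated_Groups"
begin

(* Vectors of R^7 / Z^7 are JNF vectors of dimension 7, with 0-based indices:
   coordinate x_i of the paper is  x $ (i-1);  e_i is  unit_vec 7 (i-1). *)

definition lor :: "'a::comm_ring vec \<Rightarrow> 'a vec \<Rightarrow> 'a" where
  "lor x y = (\<Sum>i<6. x $ i * y $ i) - x $ 6 * y $ 6"

definition H6 :: "real vec set" where
  "H6 = {x \<in> carrier_vec 7. lor x x = -1 \<and> x $ 6 > 0}"

definition Gamma6_set :: "int mat set" where
  "Gamma6_set = {M \<in> carrier_mat 7 7.
     (\<forall>x\<in>carrier_vec 7. \<forall>y\<in>carrier_vec 7.
        lor (map_mat real_of_int M *\<^sub>v x) (map_mat real_of_int M *\<^sub>v y) = lor x y) \<and>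
     (\<lambda>x. map_mat real_of_int M *\<^sub>v x) ` H6 = H6}"

definition Gamma6 :: "int mat monoid" where
  "Gamma6 = \<lparr>carrier = Gamma6_set, mult = (*), one = 1\<^sub>m 7\<rparr>"

(* diag(eps_1,...,eps_6,1) with eps_i = -1 exactly for i in N (1-based) *)
definition kmat :: "nat set \<Rightarrow> int mat" where
  "kmat N = mat 7 7 (\<lambda>(i,j). if i = j then (if i < 6 \<and> Suc i \<in> N then -1 else 1) else 0)"

definition K6 :: "int mat set" where
  "K6 = {kmat N | N. N \<subseteq> {1..6}}"

definition e :: "nat \<Rightarrow> int vec" where
  "e i = unit_vec 7 (i - 1)"

definition u :: "nat \<Rightarrow> int vec" where
  "u j = (if j \<le> 6 then - e j
          else if j \<le> 21 then
            (let (a, b) = [(1,2),(1,3),(2,3),(1,4),(2,4),(3,4),(1,5),(2,5),(3,5),(4,5),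
                           (1,6),(2,6),(3,6),(4,6),(5,6)] ! (j - 7)
             in e a + e b + e 7)
          else
            (let c = [6,5,4,3,2,1::nat] ! (j - 22)
             in (e 1 + e 2 + e 3 + e 4 + e 5 + e 6) - e c + 2 \<cdot>\<^sub>v e 7))"

(* matrix of the reflection x \<mapsto> x - 2<x,v>v : column b is the image of e_{b+1} *)
definition refl_mat :: "int vec \<Rightarrow> int mat" where
  "refl_mat v = mat 7 7 (\<lambda>(a,b). (if a = b then 1 else 0) - 2 * lor (unit_vec 7 b) v * v $ a)"

definition R :: "nat \<Rightarrow> int mat" where
  "R j = refl_mat (u j)"

definition N :: "nat \<Rightarrow> nat set" where
  "N j = [{2,3,5},{1,2,3,4,5},{3,4,5},{1,2,3,5,6},{1,4,6},{2,3,5},{3,4,5},{1,2,5},{5},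
          {2,4,6},{1,2,5},{2,4,6},{6},{1,3,4},{1,2,3,5,6},{1,3,4},{2},{1,4,6},
          {1,2,3,4,5},{4},{3}] ! (j - 7)"

definition k :: "nat \<Rightarrow> int mat" where
  "k j = kmat (N j)"

definition Hgens :: "int mat set" where
  "Hgens = {l * R j * l * k j | l j. l \<in> K6 \<and> 7 \<le> j \<and> j \<le> 27}"

definition Hgrp :: "int mat set" where
  "Hgrp = generate Gamma6 Hgens"

definition A :: "int mat" where
  "A = mat_of_rows_list 7
    [[1,0,0,0,0,0,0],
     [0,1,0,0,1,0,-1],
     [0,0,0,0,0,1,0],
     [0,-1,0,-1,0,0,1],
     [0,0,1,0,0,0,0],
     [0,0,0,-1,-1,0,1],
     [0,-1,0,-1,-1,0,2]]"

end

(* Write R_i for the reflection in u_i, so that R_i = k_{i} for i <= 6.  The generators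
   l R_j l k_j of H show that R_j agrees with k_j modulo H, and an induction on words shows
   that a product of reflections lies in H as soon as the sign changes attached to its
   letters cancel.  The Lorentzian matrix X = k_{2} A permutes the roots, X u_i = u_(tau i),
   hence X R_i X^-1 = R_(tau i); as tau respects the relations R_j = prod_{i in N_j} R_i
   (mod H), conjugation by X maps each generator of H to a word with cancelling signs.  The
   same holds for A^-1 k_{2}, and K^6 normalises H because it permutes the generators.
   Since A = k_{2} X and A^-1 = (A^-1 k_{2}) k_{2}, both A H A^-1 and A^-1 H A lie in H. *)

theory Submission
  imports Defs
begin

section \<open>Lorentz-orthogonal matrices\<close>

lemma mult_carrier_mat_7 [simp]:
  "P \<in> carrier_mat 7 7 \<Longrightarrow> Q \<in> carrier_mat 7 7 \<Longrightarrow> P * Q \<in> carrier_mat 7 7"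
  by (rule mult_carrier_mat)

lemma left_mult_one_mat_7 [simp]: "(P :: 'a::semiring_1 mat) \<in> carrier_mat 7 7 \<Longrightarrow> 1\<^sub>m 7 * P = P"
  by (rule left_mult_one_mat)

lemma right_mult_one_mat_7 [simp]: "(P :: 'a::semiring_1 mat) \<in> carrier_mat 7 7 \<Longrightarrow> P * 1\<^sub>m 7 = P"
  by (rule right_mult_one_mat)

lemma assoc_mult_mat_7:
  "P \<in> carrier_mat 7 7 \<Longrightarrow> Q \<in> carrier_mat 7 7 \<Longrightarrow> T \<in> carrier_mat 7 7 \<Longrightarrow>
    P * Q * T = P * (Q * T)"
  by (rule assoc_mult_mat)

lemma index_mult_mat_7:
  "P \<in> carrier_mat 7 7 \<Longrightarrow> Q \<in> carrier_mat 7 7 \<Longrightarrow> a < 7 \<Longrightarrow> b < 7 \<Longrightarrow>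
    (P * Q) $$ (a,b) = (\<Sum>t<7. P $$ (a,t) * Q $$ (t,b))"
  by (simp add: scalar_prod_def lessThan_atLeast0)

lemma transpose_mat_diag [simp]: "transpose_mat (mat_diag n f) = mat_diag n f"
  by (rule eq_matI) (auto simp: mat_diag_def)

definition lorentz_sign :: "nat \<Rightarrow> 'a::comm_ring_1" where
  "lorentz_sign i = (if i = 6 then -1 else 1)"

definition lorentz_mat :: "'a::comm_ring_1 mat" where
  "lorentz_mat = mat_diag 7 lorentz_sign"

lemma lorentz_mat_carrier [simp]: "lorentz_mat \<in> carrier_mat 7 7"
  by (simp add: lorentz_mat_def)

definition lorentzian :: "'a::comm_ring_1 mat \<Rightarrow> bool" where
  "lorentzian M \<longleftrightarrow> M \<in> carrier_mat 7 7 \<and> transpose_mat M * lorentz_mat * M = lorentz_mat"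

lemma lor_conv_sum: "lor x y = (\<Sum>i<7. x $ i * lorentz_sign i * y $ i)"
  by (simp add: lor_def lorentz_sign_def lessThan_Suc numeral_eq_Suc)

lemma lor_conv_scalar_prod:
  assumes "y \<in> carrier_vec 7"
  shows "lor x y = x \<bullet> (lorentz_mat *\<^sub>v y)"
  using assms
  by (simp add: lor_def lorentz_mat_def lorentz_sign_def mat_diag_def scalar_prod_def
      lessThan_atLeast0[symmetric] lessThan_Suc numeral_eq_Suc)

lemma lor_unit_vec:
  assumes "b < 7"
  shows "lor (unit_vec 7 b) v = lorentz_sign b * v $ b" "lor v (unit_vec 7 b) = lorentz_sign b * v $ b"
  using assms
  by (simp_all add: lor_conv_sum if_distrib[of "\<lambda>z. z * _"] if_distrib[of "\<lambda>z. _ * z"]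
      cong: if_cong)

lemma lorentz_congruence_index:
  assumes "M \<in> carrier_mat 7 7" "a < 7" "b < 7"
  shows "(transpose_mat M * lorentz_mat * M) $$ (a,b) = (\<Sum>t<7. M $$ (t,a) * lorentz_sign t * M $$ (t,b))"
proof -
  have MJ: "(transpose_mat M * lorentz_mat) $$ (a,t) = M $$ (t,a) * lorentz_sign t" if "t < 7" for t
    using assms that by (simp add: lorentz_mat_def mat_diag_mult_right[of _ 7])
  have "(transpose_mat M * lorentz_mat * M) $$ (a,b) = (\<Sum>t<7. (transpose_mat M * lorentz_mat) $$ (a,t) * M $$ (t,b))"
    using assms by (intro index_mult_mat_7) auto
  also have "\<dots> = (\<Sum>t<7. M $$ (t,a) * lorentz_sign t * M $$ (t,b))"
    by (rule sum.cong) (simp_all add: MJ)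
  finally show ?thesis .
qed

lemma lorentzian_preserves_lor:
  assumes "lorentzian M" "x \<in> carrier_vec 7" "y \<in> carrier_vec 7"
  shows "lor (M *\<^sub>v x) (M *\<^sub>v y) = lor x y"
proof -
  have M: "M \<in> carrier_mat 7 7" and J: "transpose_mat M * lorentz_mat * M = lorentz_mat"
    using assms(1) by (auto simp: lorentzian_def)
  define w where "w = lorentz_mat *\<^sub>v (M *\<^sub>v y)"
  have w: "w \<in> carrier_vec 7"
    unfolding w_def using assms(3)
    by (rule mult_mat_vec_carrier[OF lorentz_mat_carrier mult_mat_vec_carrier[OF M]])
  have "lor (M *\<^sub>v x) (M *\<^sub>v y) = (M *\<^sub>v x) \<bullet> w"
    using M assms by (simp add: lor_conv_scalar_prod w_def)
  also have "\<dots> = (transpose_mat M *\<^sub>v w) \<bullet> x"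
    using M w assms by (simp add: transpose_vec_mult_scalar[OF M] comm_scalar_prod[of _ 7 w])
  also have "transpose_mat M *\<^sub>v w = (transpose_mat M * lorentz_mat * M) *\<^sub>v y"
    using M assms by (simp add: w_def assoc_mult_mat_vec[of _ 7 7 _ 7])
  also have "((transpose_mat M * lorentz_mat * M) *\<^sub>v y) \<bullet> x = lor x y"
    using J assms
    by (simp add: lor_conv_scalar_prod comm_scalar_prod[OF mult_mat_vec_carrier[OF lorentz_mat_carrier]])
  finally show ?thesis .
qed

lemma lorentzian_mult:
  assumes "lorentzian X" "lorentzian Y"
  shows "lorentzian (X * Y)"
proof -
  have X: "X \<in> carrier_mat 7 7" and Y: "Y \<in> carrier_mat 7 7"
    and JX: "transpose_mat X * lorentz_mat * X = lorentz_mat"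
    and JY: "transpose_mat Y * lorentz_mat * Y = lorentz_mat"
    using assms by (auto simp: lorentzian_def)
  have "transpose_mat (X * Y) * lorentz_mat * (X * Y)
      = transpose_mat Y * (transpose_mat X * lorentz_mat * X) * Y"
    using X Y by (simp add: transpose_mult[OF X Y] assoc_mult_mat_7)
  thus ?thesis using X Y JX JY by (simp add: lorentzian_def)
qed

lemma map_mat_of_int_lorentz_mat [simp]: "map_mat of_int lorentz_mat = lorentz_mat"
  by (rule eq_matI) (auto simp: lorentz_mat_def lorentz_sign_def mat_diag_def)

lemma lorentzian_map_of_int:
  fixes M :: "int mat"
  assumes "lorentzian M"
  shows "lorentzian (map_mat of_int M :: 'a::comm_ring_1 mat)"
proof -
  have M: "M \<in> carrier_mat 7 7" and J: "transpose_mat M * lorentz_mat * M = lorentz_mat"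
    using assms by (auto simp: lorentzian_def)
  have MT: "transpose_mat M \<in> carrier_mat 7 7" using M by simp
  have "(map_mat of_int (transpose_mat M * lorentz_mat * M) :: 'a mat)
      = transpose_mat (map_mat of_int M) * lorentz_mat * map_mat of_int M"
    unfolding of_int_hom.mat_hom_mult[OF mult_carrier_mat[OF MT lorentz_mat_carrier] M]
      of_int_hom.mat_hom_mult[OF MT lorentz_mat_carrier]
    by (simp add: map_mat_transpose)
  thus ?thesis using M J by (simp add: lorentzian_def)
qed

section \<open>The hyperboloid and \<open>Gamma6\<close>\<close>

lemma H6_lor_negative:
  assumes "x \<in> H6" "y \<in> H6"
  shows "lor x y < 0"
proof -
  define a b S where "a = x $ 6" and "b = y $ 6" and "S = (\<Sum>i<6. x $ i * y $ i)"
  have a: "a > 0" and b: "b > 0" using assms by (auto simp: H6_def a_def b_def)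
  have Sx: "(\<Sum>i<6. x $ i * x $ i) = a * a - 1" and Sy: "(\<Sum>i<6. y $ i * y $ i) = b * b - 1"
    using assms by (auto simp: H6_def a_def b_def lor_def)
  have "0 \<le> (\<Sum>i<6. (b * x $ i - a * y $ i)\<^sup>2)" by (simp add: sum_nonneg)
  also have "\<dots> = b * b * (\<Sum>i<6. x $ i * x $ i) - 2 * a * b * S + a * a * (\<Sum>i<6. y $ i * y $ i)"
    by (simp add: power2_eq_square algebra_simps sum.distrib sum_subtractf sum_distrib_left S_def)
  finally have "2 * a * b * S \<le> 2 * a * b * (a * b) - (a * a + b * b)"
    unfolding Sx Sy by (simp add: algebra_simps)
  moreover have "a * a + b * b > 0" using a b by (simp add: add_pos_pos)
  ultimately have "S < a * b" using a b by (smt (verit) mult_pos_pos mult_le_cancel_left)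
  thus ?thesis by (simp add: lor_def S_def a_def b_def)
qed

lemma lorentzian_maps_H6:
  fixes M :: "real mat"
  assumes M: "lorentzian M" and pos: "M $$ (6,6) > 0" and x: "x \<in> H6"
  shows "M *\<^sub>v x \<in> H6"
proof -
  have Mc: "M \<in> carrier_mat 7 7" using M by (simp add: lorentzian_def)
  have xc: "x \<in> carrier_vec 7" using x by (simp add: H6_def)
  define e7 where "e7 = (unit_vec 7 6 :: real vec)"
  have e7: "e7 \<in> carrier_vec 7" by (simp add: e7_def)
  have "lor (M *\<^sub>v e7) (M *\<^sub>v e7) = -1" "(M *\<^sub>v e7) $ 6 > 0"
    using lorentzian_preserves_lor[OF M e7 e7] Mc pos by (simp_all add: e7_def lor_def)
  hence w: "M *\<^sub>v e7 \<in> H6" using mult_mat_vec_carrier[OF Mc e7] by (simp add: H6_def)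
  define y where "y = M *\<^sub>v x"
  have yc: "y \<in> carrier_vec 7" using Mc xc by (simp add: y_def)
  have yy: "lor y y = -1" using lorentzian_preserves_lor[OF M xc xc] x by (simp add: y_def H6_def)
  have yw: "lor y (M *\<^sub>v e7) = - x $ 6"
    using lorentzian_preserves_lor[OF M xc e7] by (simp add: y_def e7_def lor_def)
  have "y $ 6 \<noteq> 0"
  proof
    assume "y $ 6 = 0"
    hence "lor y y = (\<Sum>i<6. y $ i * y $ i)" by (simp add: lor_def)
    also have "\<dots> \<ge> 0" by (simp add: sum_nonneg)
    finally show False using yy by simp
  qed
  moreover have "\<not> y $ 6 < 0"
  proof
    assume "y $ 6 < 0"
    hence "-y \<in> H6" using yc yy by (simp add: H6_def lor_def sum_negf)
    hence "lor (-y) (M *\<^sub>v e7) < 0" using w by (rule H6_lor_negative)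
    thus False using yw x yc by (simp add: lor_def sum_negf H6_def)
  qed
  ultimately show ?thesis using yc yy by (simp add: H6_def y_def)
qed

lemma Gamma6_setI:
  fixes M M' :: "int mat"
  assumes M: "lorentzian M" and M': "lorentzian M'" and inv: "M * M' = 1\<^sub>m 7"
    and pos: "M $$ (6,6) > 0" "M' $$ (6,6) > 0"
  shows "M \<in> Gamma6_set"
proof -
  let ?f = "\<lambda>N x. map_mat real_of_int N *\<^sub>v x"
  have Mc: "M \<in> carrier_mat 7 7" and M'c: "M' \<in> carrier_mat 7 7"
    using M M' by (auto simp: lorentzian_def)
  have maps: "?f N ` H6 \<subseteq> H6" if "lorentzian N" "N $$ (6,6) > 0" for N
    using lorentzian_maps_H6[OF lorentzian_map_of_int[OF that(1)]] that
    by (auto simp: lorentzian_def)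
  have "y = ?f M (?f M' y)" if "y \<in> H6" for y
  proof -
    have "?f M (?f M' y) = map_mat real_of_int (M * M') *\<^sub>v y"
      using Mc M'c that by (simp add: H6_def of_int_hom.mat_hom_mult[OF Mc M'c])
    thus ?thesis using that by (simp add: inv H6_def of_int_hom.mat_hom_one)
  qed
  hence "H6 \<subseteq> ?f M ` H6" using maps[OF M' pos(2)] by blast
  hence "?f M ` H6 = H6" using maps[OF M pos(1)] by blast
  thus ?thesis
    using Mc lorentzian_preserves_lor[OF lorentzian_map_of_int[OF M]] by (auto simp: Gamma6_set_def)
qed

lemma Gamma6_set_mult_closed:
  assumes M: "M \<in> Gamma6_set" and Q: "Q \<in> Gamma6_set"
  shows "M * Q \<in> Gamma6_set"
proof -
  let ?f = "\<lambda>N x. map_mat real_of_int N *\<^sub>v x"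
  have Mc: "M \<in> carrier_mat 7 7" and Qc: "Q \<in> carrier_mat 7 7"
    using M Q by (auto simp: Gamma6_set_def)
  have comp: "?f (M * Q) x = ?f M (?f Q x)" if "x \<in> carrier_vec 7" for x
    using Mc Qc that by (simp add: of_int_hom.mat_hom_mult[OF Mc Qc])
  have "?f (M * Q) ` H6 = ?f M ` ?f Q ` H6"
    unfolding image_image by (rule image_cong) (simp_all add: comp H6_def)
  moreover have "lor (?f (M * Q) x) (?f (M * Q) y) = lor x y"
    if "x \<in> carrier_vec 7" "y \<in> carrier_vec 7" for x y
    using M Q Qc that by (simp add: comp Gamma6_set_def)
  ultimately show ?thesis using M Q Mc Qc by (simp add: Gamma6_set_def)
qed

lemma Gamma6_inv_eq:
  assumes g: "g \<in> carrier_mat 7 7" and h: "h \<in> Gamma6_set"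
    and gh: "g * h = 1\<^sub>m 7" and hg: "h * g = 1\<^sub>m 7"
  shows "inv\<^bsub>Gamma6\<^esub> g = h"
  unfolding m_inv_def Gamma6_def
proof (simp, rule the_equality)
  fix h' assume h': "h' \<in> Gamma6_set \<and> g * h' = 1\<^sub>m 7 \<and> h' * g = 1\<^sub>m 7"
  have h'c: "h' \<in> carrier_mat 7 7" and hc: "h \<in> carrier_mat 7 7"
    using h h' by (auto simp: Gamma6_set_def)
  have "h' = h' * (g * h)" using gh h'c by simp
  also have "\<dots> = h" using h' h'c g hc by (simp add: assoc_mult_mat[symmetric, OF h'c g hc])
  finally show "h' = h" .
qed (use h gh hg in simp)

section \<open>Sign changes and reflections\<close>

lemma kmat_eq_mat_diag: "kmat S = mat_diag 7 (\<lambda>i. if i < 6 \<and> Suc i \<in> S then -1 else 1)"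
  by (rule eq_matI) (auto simp: kmat_def mat_diag_def)

lemma kmat_carrier [simp]: "kmat S \<in> carrier_mat 7 7"
  by (simp add: kmat_def)

lemma kmat_mult: "kmat S * kmat T = kmat (sym_diff S T)"
  unfolding kmat_eq_mat_diag mat_diag_diag by (rule arg_cong[where f = "mat_diag 7"]) auto

lemma kmat_empty: "kmat {} = 1\<^sub>m 7"
  unfolding kmat_eq_mat_diag by simp

lemma kmat_involution: "kmat S * kmat S = 1\<^sub>m 7"
  by (simp add: kmat_mult kmat_empty)

lemma sym_diff_cancel_right [simp]: "sym_diff (sym_diff S T) T = S"
  by auto

lemma kmat_mult_left: "X \<in> carrier_mat 7 7 \<Longrightarrow> kmat S * (kmat T * X) = kmat (sym_diff S T) * X"
  by (simp add: kmat_mult[symmetric] assoc_mult_mat_7[symmetric])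

lemma kmat_involution_left: "X \<in> carrier_mat 7 7 \<Longrightarrow> kmat S * (kmat S * X) = X"
  by (simp add: kmat_mult_left kmat_empty)

lemma lorentzian_kmat: "lorentzian (kmat S)"
  unfolding lorentzian_def kmat_eq_mat_diag lorentz_mat_def
  by (simp add: mat_diag_diag) (rule arg_cong[where f = "mat_diag 7"], auto simp: lorentz_sign_def)

lemma kmat_in_Gamma6_set: "kmat S \<in> Gamma6_set"
  by (rule Gamma6_setI[OF lorentzian_kmat lorentzian_kmat kmat_involution]) (simp_all add: kmat_def)

lemma refl_mat_carrier [simp]: "refl_mat v \<in> carrier_mat 7 7"
  by (simp add: refl_mat_def)

lemma refl_mat_index:
  "a < 7 \<Longrightarrow> b < 7 \<Longrightarrow>
    refl_mat v $$ (a,b) = (if a = b then 1 else 0) - 2 * (lorentz_sign b * v $ b) * v $ a"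
  by (simp add: refl_mat_def lor_unit_vec)

lemma sum_delta_diff_mult:
  fixes \<alpha> \<beta> w :: "nat \<Rightarrow> 'a::comm_ring_1"
  assumes "a < n" "b < n"
  shows "(\<Sum>t<n. ((if t = a then 1 else 0) - \<alpha> t) * w t * ((if t = b then 1 else 0) - \<beta> t))
    = (if a = b then w a else 0) - w a * \<beta> a - \<alpha> b * w b + (\<Sum>t<n. \<alpha> t * w t * \<beta> t)"
proof -
  have "(\<Sum>t<n. ((if t = a then 1 else 0) - \<alpha> t) * w t * ((if t = b then 1 else 0) - \<beta> t))
     = (\<Sum>t<n. (if t = a then (if a = b then w a else 0) else 0) - (if t = a then w a * \<beta> a else 0)
          - (if t = b then \<alpha> b * w b else 0) + \<alpha> t * w t * \<beta> t)"
    by (rule sum.cong) (auto simp: algebra_simps)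
  also have "\<dots> = (if a = b then w a else 0) - w a * \<beta> a - \<alpha> b * w b + (\<Sum>t<n. \<alpha> t * w t * \<beta> t)"
    using assms by (simp add: sum.distrib sum_subtractf)
  finally show ?thesis .
qed

lemma refl_mat_involution:
  assumes "lor v v = 1"
  shows "refl_mat v * refl_mat v = 1\<^sub>m 7"
proof (rule eq_matI)
  fix a b assume "a < dim_row (1\<^sub>m 7 :: int mat)" "b < dim_col (1\<^sub>m 7 :: int mat)"
  hence ab: "a < 7" "b < 7" by auto
  have "(refl_mat v * refl_mat v) $$ (a,b)
      = (\<Sum>t<7. ((if t = a then 1 else 0) - 2 * (lorentz_sign t * v $ t) * v $ a) * 1 *
                ((if t = b then 1 else 0) - 2 * (lorentz_sign b * v $ b) * v $ t))"
    using ab by (simp add: index_mult_mat_7) (intro sum.cong refl, auto simp: refl_mat_index)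
  also have "\<dots> = (if a = b then 1 else 0) - 4 * (lorentz_sign b * v $ b) * v $ a * (1 - lor v v)"
    by (subst sum_delta_diff_mult[OF ab]) (simp add: lor_conv_sum sum_distrib_left algebra_simps)
  finally show "(refl_mat v * refl_mat v) $$ (a,b) = 1\<^sub>m 7 $$ (a,b)" using assms ab by simp
qed (auto simp: refl_mat_def)

lemma lorentzian_refl_mat:
  assumes "lor v v = 1"
  shows "lorentzian (refl_mat v)"
  unfolding lorentzian_def
proof (intro conjI refl_mat_carrier eq_matI)
  fix a b assume "a < dim_row (lorentz_mat :: int mat)" "b < dim_col (lorentz_mat :: int mat)"
  hence ab: "a < 7" "b < 7" by (auto simp: lorentz_mat_def mat_diag_def)
  have "(transpose_mat (refl_mat v) * lorentz_mat * refl_mat v) $$ (a,b)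
      = (\<Sum>t<7. ((if t = a then 1 else 0) - 2 * (lorentz_sign a * v $ a) * v $ t) * lorentz_sign t *
                ((if t = b then 1 else 0) - 2 * (lorentz_sign b * v $ b) * v $ t))"
    using ab by (simp add: lorentz_congruence_index) (intro sum.cong refl, auto simp: refl_mat_index)
  also have "\<dots> = (if a = b then lorentz_sign a else 0)
      + 4 * (lorentz_sign a * v $ a) * (lorentz_sign b * v $ b) * (lor v v - 1)"
    by (subst sum_delta_diff_mult[OF ab]) (simp add: lor_conv_sum sum_distrib_left algebra_simps)
  finally show "(transpose_mat (refl_mat v) * lorentz_mat * refl_mat v) $$ (a,b) = lorentz_mat $$ (a,b)"
    using assms ab by (simp add: lorentz_mat_def mat_diag_def)
qed (auto simp: lorentz_mat_def mat_diag_def refl_mat_def)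

lemma refl_mat_in_Gamma6_set:
  assumes "lor v v = 1"
  shows "refl_mat v \<in> Gamma6_set"
proof -
  have "refl_mat v $$ (6,6) = 1 + 2 * (v $ 6 * v $ 6)" by (simp add: refl_mat_index lorentz_sign_def)
  hence "refl_mat v $$ (6,6) > 0" by (smt (verit) zero_le_square)
  with assms show ?thesis
    using Gamma6_setI lorentzian_refl_mat refl_mat_involution by blast
qed

lemma refl_mat_conj:
  assumes X: "lorentzian X" and v: "v \<in> carrier_vec 7"
  shows "X * refl_mat v = refl_mat (X *\<^sub>v v) * X"
proof (rule eq_matI)
  have Xc: "X \<in> carrier_mat 7 7" using X by (simp add: lorentzian_def)
  fix a b assume "a < dim_row (refl_mat (X *\<^sub>v v) * X)" "b < dim_col (refl_mat (X *\<^sub>v v) * X)"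
  hence ab: "a < 7" "b < 7" using Xc by (auto simp: refl_mat_def)
  define w where "w = X *\<^sub>v v"
  have w: "t < 7 \<Longrightarrow> w $ t = (\<Sum>s<7. X $$ (t,s) * v $ s)" for t
    using Xc v by (simp add: w_def scalar_prod_def lessThan_atLeast0)
  have "(\<Sum>t<7. w $ t * lorentz_sign t * X $$ (t,b)) = lor w (X *\<^sub>v unit_vec 7 b)"
    using Xc ab by (simp add: lor_conv_sum)
  also have "\<dots> = lorentz_sign b * v $ b"
    using lorentzian_preserves_lor[OF X v unit_vec_carrier] ab by (simp add: w_def lor_unit_vec)
  finally have key: "(\<Sum>t<7. w $ t * lorentz_sign t * X $$ (t,b)) = lorentz_sign b * v $ b" .
  have "(X * refl_mat v) $$ (a,b)
      = (\<Sum>t<7. (if t = b then X $$ (a,t) else 0) - 2 * (lorentz_sign b * v $ b) * (X $$ (a,t) * v $ t))"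
    using Xc ab by (simp add: index_mult_mat_7) (intro sum.cong refl, auto simp: refl_mat_index algebra_simps)
  also have "\<dots> = X $$ (a,b) - 2 * (lorentz_sign b * v $ b) * w $ a"
    using ab by (simp add: sum_subtractf sum_distrib_left w)
  also have "\<dots> = (\<Sum>t<7. (if t = a then X $$ (t,b) else 0) - 2 * w $ a * (w $ t * lorentz_sign t * X $$ (t,b)))"
    using ab by (simp add: sum_subtractf sum_distrib_left flip: key) (simp add: sum_distrib_left mult_ac)
  also have "\<dots> = (refl_mat w * X) $$ (a,b)"
    using Xc ab by (simp add: index_mult_mat_7) (intro sum.cong refl, auto simp: refl_mat_index algebra_simps)
  finally show "(X * refl_mat v) $$ (a,b) = (refl_mat (X *\<^sub>v v) * X) $$ (a,b)"
    by (simp add: w_def)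
qed (use X in \<open>auto simp: refl_mat_def lorentzian_def\<close>)

lemma u_carrier [simp]: "u j \<in> carrier_vec 7"
  by (simp add: u_def e_def Let_def split: prod.split)

lemma N_subset:
  assumes "j \<in> {7..27}"
  shows "N j \<subseteq> {1..6}"
proof -
  have "\<forall>j\<in>{7..27}. N j \<subseteq> {1..6}" by code_simp
  thus ?thesis using assms by blast
qed

lemma root_lor_norm:
  assumes "j \<in> {7..27}"
  shows "lor (u j) (u j) = 1"
proof -
  have "\<forall>j\<in>{7..27}. lor (u j) (u j) = 1" by code_simp
  thus ?thesis using assms by blast
qed

lemma R_carrier [simp]: "R j \<in> carrier_mat 7 7"
  by (simp add: R_def)

lemma R_eq_kmat: "1 \<le> i \<Longrightarrow> i \<le> 6 \<Longrightarrow> R i = kmat {i}"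
  by (rule eq_matI)
    (auto simp: R_def u_def e_def refl_mat_index kmat_def lorentz_sign_def,
     simp_all add: R_def refl_mat_def)

lemma R_involution_left: "j \<in> {7..27} \<Longrightarrow> X \<in> carrier_mat 7 7 \<Longrightarrow> R j * (R j * X) = X"
  using refl_mat_involution[OF root_lor_norm]
  by (simp add: R_def assoc_mult_mat_7[symmetric])

section \<open>The group \<open>H\<close>\<close>

lemma generate_closed_under_map:
  assumes h: "h \<in> generate G S"
    and one: "f \<one>\<^bsub>G\<^esub> \<in> generate G S"
    and gen: "\<And>g. g \<in> S \<Longrightarrow> f g \<in> generate G S"
    and gen_inv: "\<And>g. g \<in> S \<Longrightarrow> f (inv\<^bsub>G\<^esub> g) \<in> generate G S"
    and mult: "\<And>a b. a \<in> generate G S \<Longrightarrow> b \<in> generate G S \<Longrightarrow>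
      f (a \<otimes>\<^bsub>G\<^esub> b) = f a \<otimes>\<^bsub>G\<^esub> f b"
  shows "f h \<in> generate G S"
  using h by induction (simp_all add: one gen gen_inv mult generate.eng)

lemma conj_image_eq:
  fixes X Y :: "'a::semiring_1 mat"
  assumes "H \<subseteq> carrier_mat n n" "X \<in> carrier_mat n n" "Y \<in> carrier_mat n n"
    and "X * Y = 1\<^sub>m n" "Y * X = 1\<^sub>m n"
    and "\<And>h. h \<in> H \<Longrightarrow> X * h * Y \<in> H" "\<And>h. h \<in> H \<Longrightarrow> Y * h * X \<in> H"
  shows "(\<lambda>h. X * h * Y) ` H = H"
proof
  show "(\<lambda>h. X * h * Y) ` H \<subseteq> H" using assms(6) by blast
  show "H \<subseteq> (\<lambda>h. X * h * Y) ` H"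
  proof
    fix h assume h: "h \<in> H"
    hence hc: "h \<in> carrier_mat n n" using assms(1) by blast
    have "X * (Y * h * X) * Y = (X * Y) * h * (X * Y)"
      using assms(2,3) hc by (simp add: assoc_mult_mat[of _ n n _ n _ n])
    also have "\<dots> = h" using hc by (simp add: assms(4) left_mult_one_mat[OF hc] right_mult_one_mat[OF hc])
    finally show "h \<in> (\<lambda>h. X * h * Y) ` H" using assms(7)[OF h] by (metis image_eqI)
  qed
qed

definition Hgen :: "nat set \<Rightarrow> nat \<Rightarrow> int mat" where
  "Hgen L j = kmat L * R j * kmat L * k j"

lemma Hgens_eq: "Hgens = {Hgen L j | L j. L \<subseteq> {1..6} \<and> j \<in> {7..27}}"
  unfolding Hgens_def Hgen_def K6_def by auto

lemma Hgen_eq: "Hgen L j = kmat L * R j * kmat (sym_diff L (N j))"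
  by (simp add: Hgen_def k_def kmat_mult[symmetric] assoc_mult_mat_7)

lemma Hgen_carrier [simp]: "Hgen L j \<in> carrier_mat 7 7"
  by (simp add: Hgen_eq)

lemma Hgen_in_Gamma6_set: "j \<in> {7..27} \<Longrightarrow> Hgen L j \<in> Gamma6_set"
  unfolding Hgen_eq R_def
  by (intro Gamma6_set_mult_closed kmat_in_Gamma6_set refl_mat_in_Gamma6_set root_lor_norm)

lemma Hgen_mult_partner:
  assumes "j \<in> {7..27}"
  shows "Hgen L j * Hgen (sym_diff L (N j)) j = 1\<^sub>m 7"
  using assms
  by (simp add: Hgen_eq assoc_mult_mat_7 kmat_involution_left R_involution_left
      kmat_involution)

lemma Hgen_inv:
  assumes "j \<in> {7..27}"
  shows "inv\<^bsub>Gamma6\<^esub> (Hgen L j) = Hgen (sym_diff L (N j)) j"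
  using Hgen_mult_partner[OF assms, of "sym_diff L (N j)"]
  by (intro Gamma6_inv_eq Hgen_carrier Hgen_in_Gamma6_set Hgen_mult_partner assms) simp

lemma Hgrp_one: "1\<^sub>m 7 \<in> Hgrp"
  using generate.one[of Gamma6 Hgens] by (simp add: Hgrp_def Gamma6_def)

lemma Hgrp_mult: "a \<in> Hgrp \<Longrightarrow> b \<in> Hgrp \<Longrightarrow> a * b \<in> Hgrp"
  using generate.eng[of a Gamma6 Hgens b] by (simp add: Hgrp_def Gamma6_def)

lemma Hgen_in_Hgrp: "L \<subseteq> {1..6} \<Longrightarrow> j \<in> {7..27} \<Longrightarrow> Hgen L j \<in> Hgrp"
  unfolding Hgrp_def Hgens_eq by (rule generate.incl) blast

lemma Hgrp_subset_Gamma6_set: "Hgrp \<subseteq> Gamma6_set"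
proof
  fix h assume "h \<in> Hgrp"
  thus "h \<in> Gamma6_set" unfolding Hgrp_def
  proof induction
    case one
    show ?case using kmat_in_Gamma6_set[of "{}"] by (simp add: Gamma6_def kmat_empty)
  next
    case (incl h)
    thus ?case by (auto simp: Hgens_eq Hgen_in_Gamma6_set)
  next
    case (inv h)
    thus ?case by (auto simp: Hgens_eq Hgen_inv Hgen_in_Gamma6_set)
  next
    case (eng a b)
    thus ?case by (simp add: Gamma6_def Gamma6_set_mult_closed)
  qed
qed

lemma Hgrp_carrier: "h \<in> Hgrp \<Longrightarrow> h \<in> carrier_mat 7 7"
  using Hgrp_subset_Gamma6_set by (auto simp: Gamma6_set_def)

lemma kmat_conj_Hgen: "kmat S * Hgen L j * kmat S = Hgen (sym_diff S L) j"
proof -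
  have "kmat S * Hgen L j * kmat S = kmat (sym_diff S L) * R j * kmat (sym_diff (sym_diff L (N j)) S)"
    by (simp add: Hgen_eq assoc_mult_mat_7 kmat_mult_left kmat_mult)
  also have "sym_diff (sym_diff L (N j)) S = sym_diff (sym_diff S L) (N j)"
    by auto
  finally show ?thesis by (simp add: Hgen_eq)
qed

lemma kmat_conj_Hgrp:
  assumes "S \<subseteq> {1..6}" "h \<in> Hgrp"
  shows "kmat S * h * kmat S \<in> Hgrp"
  using assms(2) unfolding Hgrp_def
proof (rule generate_closed_under_map)
  show "kmat S * \<one>\<^bsub>Gamma6\<^esub> * kmat S \<in> generate Gamma6 Hgens"
    using Hgrp_one by (simp add: Gamma6_def Hgrp_def kmat_involution)
next
  fix g assume "g \<in> Hgens"
  then obtain L j where L: "L \<subseteq> {1..6}" and j: "j \<in> {7..27}" and g: "g = Hgen L j"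
    by (auto simp: Hgens_eq)
  have "sym_diff S L \<subseteq> {1..6}" "sym_diff S (sym_diff L (N j)) \<subseteq> {1..6}"
    using assms(1) L N_subset[OF j] by auto
  thus "kmat S * g * kmat S \<in> generate Gamma6 Hgens"
    and "kmat S * inv\<^bsub>Gamma6\<^esub> g * kmat S \<in> generate Gamma6 Hgens"
    using Hgen_in_Hgrp[OF _ j, unfolded Hgrp_def] by (simp_all add: g kmat_conj_Hgen Hgen_inv[OF j])
next
  fix a b assume "a \<in> generate Gamma6 Hgens" "b \<in> generate Gamma6 Hgens"
  hence "a \<in> carrier_mat 7 7" "b \<in> carrier_mat 7 7"
    using Hgrp_carrier unfolding Hgrp_def by blast+
  thus "kmat S * (a \<otimes>\<^bsub>Gamma6\<^esub> b) * kmat S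
      = kmat S * a * kmat S \<otimes>\<^bsub>Gamma6\<^esub> (kmat S * b * kmat S)"
    by (simp add: Gamma6_def assoc_mult_mat_7 kmat_involution_left)
qed

section \<open>Words in the reflections\<close>

text \<open>\<open>kmat (sign_set j)\<close> is the sign change that \<open>R j\<close> equals modulo \<open>H\<close>: \<open>k j\<close> for
  \<open>j \<ge> 7\<close>, and \<open>R j\<close> itself for \<open>j \<le> 6\<close>.\<close>

definition sign_set :: "nat \<Rightarrow> nat set" where
  "sign_set j = (if j \<le> 6 then {j} else N j)"

fun refl_word :: "nat list \<Rightarrow> int mat" where
  "refl_word [] = 1\<^sub>m 7"
| "refl_word (j # ws) = R j * refl_word ws"

fun word_signs :: "nat list \<Rightarrow> nat set" where
  "word_signs [] = {}"
| "word_signs (j # ws) = sym_diff (sign_set j) (word_signs ws)"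

lemma refl_word_carrier [simp]: "refl_word ws \<in> carrier_mat 7 7"
  by (induction ws) simp_all

lemma refl_word_append: "refl_word (xs @ ys) = refl_word xs * refl_word ys"
  by (induction xs) (simp_all add: assoc_mult_mat_7)

lemma word_signs_append: "word_signs (xs @ ys) = sym_diff (word_signs xs) (word_signs ys)"
  by (induction xs) auto

lemma sign_set_subset: "j \<in> {1..27} \<Longrightarrow> sign_set j \<subseteq> {1..6}"
  using N_subset by (auto simp: sign_set_def)

lemma kmat_refl_word_in_Hgrp:
  assumes "set ws \<subseteq> {1..27}" "L \<subseteq> {1..6}"
  shows "kmat L * refl_word ws * kmat (word_signs ws) * kmat L \<in> Hgrp"
  using assms
proof (induction ws arbitrary: L)
  case Nil
  thus ?case by (simp add: kmat_empty kmat_involution Hgrp_one)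
next
  case (Cons j ws)
  define c C L' where "c = sign_set j" and "C = word_signs ws" and "L' = sym_diff c L"
  have j: "j \<in> {1..27}" using Cons.prems by auto
  have "L' \<subseteq> {1..6}" using sign_set_subset[OF j] Cons.prems by (auto simp: L'_def c_def)
  hence IH: "kmat L' * refl_word ws * kmat C * kmat L' \<in> Hgrp"
    using Cons by (simp add: C_def)
  define F where "F = kmat L * R j * kmat L * kmat c"
  have F: "F \<in> Hgrp"
  proof (cases "j \<le> 6")
    case True
    hence "F = kmat (sym_diff (sym_diff (sym_diff L {j}) L) {j})"
      using j by (simp add: F_def R_eq_kmat c_def sign_set_def kmat_mult)
    also have "sym_diff (sym_diff (sym_diff L {j}) L) {j} = {}" by auto
    finally show ?thesis by (simp add: kmat_empty Hgrp_one)
  next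
    case False
    hence "F = Hgen L j" by (simp add: F_def Hgen_def c_def sign_set_def k_def)
    thus ?thesis using False j Cons.prems by (simp add: Hgen_in_Hgrp)
  qed
  have "F * (kmat L' * refl_word ws * kmat C * kmat L')
      = kmat L * (R j * (kmat (sym_diff (sym_diff L c) L') * (refl_word ws * kmat (sym_diff C L'))))"
    by (simp add: F_def assoc_mult_mat_7 kmat_mult_left kmat_mult)
  also have "sym_diff (sym_diff L c) L' = {}" by (auto simp: L'_def)
  also have "sym_diff C L' = sym_diff (sym_diff c C) L" by (auto simp: L'_def)
  finally have "F * (kmat L' * refl_word ws * kmat C * kmat L')
      = kmat L * refl_word (j # ws) * kmat (word_signs (j # ws)) * kmat L"
    by (simp add: kmat_empty kmat_mult C_def c_def assoc_mult_mat_7)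
  thus ?case using Hgrp_mult[OF F IH] by simp
qed

lemma refl_word_in_Hgrp:
  "set ws \<subseteq> {1..27} \<Longrightarrow> word_signs ws = {} \<Longrightarrow> refl_word ws \<in> Hgrp"
  using kmat_refl_word_in_Hgrp[of ws "{}"] by (simp add: kmat_empty)

lemma refl_word_eq_kmat:
  assumes "distinct xs" "set xs \<subseteq> {1..6}"
  shows "refl_word xs = kmat (set xs)"
  using assms
proof (induction xs)
  case (Cons j xs)
  hence "refl_word (j # xs) = kmat (sym_diff {j} (set xs))" by (simp add: R_eq_kmat kmat_mult)
  also have "sym_diff {j} (set xs) = set (j # xs)" using Cons.prems by auto
  finally show ?case .
qed (simp add: kmat_empty)

lemma refl_word_sorted_list_of_set:
  assumes "S \<subseteq> {1..6}"
  shows "refl_word (sorted_list_of_set S) = kmat S"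
proof -
  have "finite S" using assms finite_subset by blast
  thus ?thesis using refl_word_eq_kmat[of "sorted_list_of_set S"] assms by simp
qed

section \<open>Matrices permuting the roots\<close>

locale root_permutation =
  fixes X Y :: "int mat" and \<tau> :: "nat \<Rightarrow> nat"
  assumes lorentzian: "lorentzian X"
    and Y_carrier: "Y \<in> carrier_mat 7 7" and XY: "X * Y = 1\<^sub>m 7" and YX: "Y * X = 1\<^sub>m 7"
    and maps_roots: "\<And>i. i \<in> {1..27} \<Longrightarrow> \<tau> i \<in> {1..27} \<and> X *\<^sub>v u i = u (\<tau> i)"
    \<comment> \<open>the relation \<open>R j = \<Prod>i\<in>N j. R i\<close> modulo \<open>H\<close> is mapped to a relation of the same kind\<close>
    and maps_signs:
      "\<And>j. j \<in> {7..27} \<Longrightarrow> sign_set (\<tau> j) = word_signs (map \<tau> (sorted_list_of_set (N j)))"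
begin

lemma X_carrier: "X \<in> carrier_mat 7 7"
  using lorentzian by (simp add: lorentzian_def)

lemma conj_R: "i \<in> {1..27} \<Longrightarrow> X * R i * Y = R (\<tau> i)"
  using refl_mat_conj[OF lorentzian u_carrier] maps_roots X_carrier Y_carrier
  by (simp add: R_def assoc_mult_mat_7 XY)

lemma conj_refl_word: "set ws \<subseteq> {1..27} \<Longrightarrow> X * refl_word ws * Y = refl_word (map \<tau> ws)"
proof (induction ws)
  case Nil
  thus ?case using X_carrier by (simp add: XY)
next
  case (Cons i ws)
  have "(X * R i * Y) * (X * refl_word ws * Y) = X * (R i * ((Y * X) * (refl_word ws * Y)))"
    using X_carrier Y_carrier by (simp add: assoc_mult_mat_7)
  also have "\<dots> = X * refl_word (i # ws) * Y"
    unfolding YX using X_carrier Y_carrier by (simp add: assoc_mult_mat_7)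
  finally show ?case using Cons by (simp add: conj_R)
qed

lemma conj_Hgen_in_Hgrp:
  assumes L: "L \<subseteq> {1..6}" and j: "j \<in> {7..27}"
  shows "X * Hgen L j * Y \<in> Hgrp"
proof -
  let ?ws = "sorted_list_of_set L @ [j] @ sorted_list_of_set L @ sorted_list_of_set (N j)"
  have "finite L" "finite (N j)" using L N_subset[OF j] finite_subset by blast+
  hence ws: "set ?ws \<subseteq> {1..27}" using L j N_subset[OF j] by auto
  hence ws': "set (map \<tau> ?ws) \<subseteq> {1..27}" using maps_roots by auto
  have "Hgen L j = refl_word ?ws"
    using L N_subset[OF j]
    by (simp add: Hgen_def k_def refl_word_append refl_word_sorted_list_of_set assoc_mult_mat_7)
  hence "X * Hgen L j * Y = refl_word (map \<tau> ?ws)" using conj_refl_word[OF ws] by simp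
  moreover have "word_signs (map \<tau> ?ws) = {}"
    using maps_signs[OF j] by (auto simp: word_signs_append)
  ultimately show ?thesis using refl_word_in_Hgrp[OF ws'] by simp
qed

lemma conj_Hgrp:
  assumes "h \<in> Hgrp"
  shows "X * h * Y \<in> Hgrp"
  using assms unfolding Hgrp_def
proof (rule generate_closed_under_map)
  show "X * \<one>\<^bsub>Gamma6\<^esub> * Y \<in> generate Gamma6 Hgens"
    using Hgrp_one X_carrier by (simp add: Gamma6_def Hgrp_def XY)
next
  fix g assume "g \<in> Hgens"
  then obtain L j where L: "L \<subseteq> {1..6}" and j: "j \<in> {7..27}" and g: "g = Hgen L j"
    by (auto simp: Hgens_eq)
  have "sym_diff L (N j) \<subseteq> {1..6}" using L N_subset[OF j] by auto
  thus "X * g * Y \<in> generate Gamma6 Hgens" and "X * inv\<^bsub>Gamma6\<^esub> g * Y \<in> generate Gamma6 Hgens"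
    using conj_Hgen_in_Hgrp[OF _ j, unfolded Hgrp_def] L by (simp_all add: g Hgen_inv[OF j])
next
  fix a b assume "a \<in> generate Gamma6 Hgens" "b \<in> generate Gamma6 Hgens"
  hence "a \<in> carrier_mat 7 7" "b \<in> carrier_mat 7 7"
    using Hgrp_carrier unfolding Hgrp_def by blast+
  hence "(X * a * Y) * (X * b * Y) = X * (a * ((Y * X) * (b * Y)))"
    using X_carrier Y_carrier by (simp add: assoc_mult_mat_7)
  also have "\<dots> = X * (a * b) * Y"
    unfolding YX using X_carrier Y_carrier \<open>a \<in> carrier_mat 7 7\<close> \<open>b \<in> carrier_mat 7 7\<close>
    by (simp add: assoc_mult_mat_7)
  finally show "X * (a \<otimes>\<^bsub>Gamma6\<^esub> b) * Y = X * a * Y \<otimes>\<^bsub>Gamma6\<^esub> (X * b * Y)"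
    by (simp add: Gamma6_def)
qed

end

text \<open>Equality of matrices and vectors is not executable, so checks by evaluation compare
  their entry lists.\<close>

lemma mat_eq_if_mat_to_list_eq:
  assumes "P \<in> carrier_mat n m" "Q \<in> carrier_mat n m" "mat_to_list P = mat_to_list Q"
  shows "P = Q"
proof (rule eq_matI)
  fix i j assume "i < dim_row Q" "j < dim_col Q"
  thus "P $$ (i,j) = Q $$ (i,j)"
    using assms arg_cong[OF assms(3), of "\<lambda>xss. xss ! i ! j"] by (simp add: mat_to_list_def)
qed (use assms in auto)

lemma vec_eq_if_list_of_vec_eq: "list_of_vec v = list_of_vec w \<Longrightarrow> v = w"
  by (metis vec_list)

lemma root_permutation_by_evaluation:
  assumes "lorentzian X" "Y \<in> carrier_mat 7 7" "mat_to_list (X * Y) = mat_to_list (1\<^sub>m 7)"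
    "mat_to_list (Y * X) = mat_to_list (1\<^sub>m 7)"
    and "\<forall>i\<in>{1..27}. \<tau> i \<in> {1..27} \<and> list_of_vec (X *\<^sub>v u i) = list_of_vec (u (\<tau> i))"
    and "\<forall>j\<in>{7..27}. sign_set (\<tau> j) = word_signs (map \<tau> (sorted_list_of_set (N j)))"
  shows "root_permutation X Y \<tau>"
proof -
  have "X \<in> carrier_mat 7 7" using assms(1) by (simp add: lorentzian_def)
  thus ?thesis
    using assms by unfold_locales (auto intro: mat_eq_if_mat_to_list_eq vec_eq_if_list_of_vec_eq)
qed

section \<open>The matrix \<open>A\<close>\<close>

definition A_inv :: "int mat" where
  "A_inv = mat_of_rows_list 7
    [[1,0,0,0,0,0,0],
     [0,1,0,-1,0,0,1],
     [0,0,0,0,1,0,0],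
     [0,0,0,-1,0,-1,1],
     [0,1,0,0,0,-1,1],
     [0,0,1,0,0,0,0],
     [0,1,0,-1,0,-1,2]]"

lemma A_carrier [simp]: "A \<in> carrier_mat 7 7"
  by (rule carrier_matI) (simp_all add: A_def mat_of_rows_list_def)

lemma A_inv_carrier [simp]: "A_inv \<in> carrier_mat 7 7"
  by (rule carrier_matI) (simp_all add: A_inv_def mat_of_rows_list_def)

lemma lorentzian_A: "lorentzian A"
proof -
  have "mat_to_list (transpose_mat A * lorentz_mat * A) = mat_to_list lorentz_mat" by code_simp
  thus ?thesis by (simp add: lorentzian_def mat_eq_if_mat_to_list_eq[of _ 7 7])
qed

lemma lorentzian_A_inv: "lorentzian A_inv"
proof -
  have "mat_to_list (transpose_mat A_inv * lorentz_mat * A_inv) = mat_to_list lorentz_mat" by code_simp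
  thus ?thesis by (simp add: lorentzian_def mat_eq_if_mat_to_list_eq[of _ 7 7])
qed

lemma A_mult_A_inv: "A * A_inv = 1\<^sub>m 7" "A_inv * A = 1\<^sub>m 7"
proof -
  have "mat_to_list (A * A_inv) = mat_to_list (1\<^sub>m 7)" "mat_to_list (A_inv * A) = mat_to_list (1\<^sub>m 7)"
    by code_simp+
  thus "A * A_inv = 1\<^sub>m 7" "A_inv * A = 1\<^sub>m 7" by (simp_all add: mat_eq_if_mat_to_list_eq[of _ 7 7])
qed

lemma A_in_Gamma6_set: "A \<in> Gamma6_set" "A_inv \<in> Gamma6_set"
proof -
  have "A $$ (6,6) > 0" "A_inv $$ (6,6) > 0" by code_simp+
  thus "A \<in> Gamma6_set" "A_inv \<in> Gamma6_set"
    using Gamma6_setI lorentzian_A lorentzian_A_inv A_mult_A_inv by blast+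
qed

text \<open>The root permutations of \<open>kmat {2} * A\<close> and of its inverse, found by computer and
  checked by evaluation.\<close>

definition root_perm_k2_A :: "nat \<Rightarrow> nat" where
  "root_perm_k2_A i =
    [1,11,5,20,18,3,17,25,21,7,4,14,10,2,16,6,23,19,27,9,12,13,24,26,8,22,15] ! (i - 1)"

definition root_perm_A_inv_k2 :: "nat \<Rightarrow> nat" where
  "root_perm_A_inv_k2 i =
    [1,14,6,11,3,16,10,25,20,13,2,21,22,12,27,15,7,5,18,4,9,26,17,23,8,24,19] ! (i - 1)"

lemma root_permutation_k2_A: "root_permutation (kmat {2} * A) (A_inv * kmat {2}) root_perm_k2_A"
  by (rule root_permutation_by_evaluation,
      simp add: lorentzian_mult lorentzian_kmat lorentzian_A, simp, code_simp+)

lemma root_permutation_A_inv_k2: "root_permutation (A_inv * kmat {2}) (kmat {2} * A) root_perm_A_inv_k2"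
  by (rule root_permutation_by_evaluation,
      simp add: lorentzian_mult lorentzian_kmat lorentzian_A_inv, simp, code_simp+)

lemma A_conj_Hgrp:
  assumes "h \<in> Hgrp"
  shows "A * h * A_inv \<in> Hgrp"
proof -
  have "A * h * A_inv = kmat {2} * ((kmat {2} * A) * h * (A_inv * kmat {2})) * kmat {2}"
    using Hgrp_carrier[OF assms] by (simp add: assoc_mult_mat_7 kmat_involution_left kmat_involution)
  thus ?thesis
    using kmat_conj_Hgrp root_permutation.conj_Hgrp[OF root_permutation_k2_A assms] by simp
qed

lemma A_inv_conj_Hgrp:
  assumes "h \<in> Hgrp"
  shows "A_inv * h * A \<in> Hgrp"
proof -
  have "A_inv * h * A = (A_inv * kmat {2}) * (kmat {2} * h * kmat {2}) * (kmat {2} * A)"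
    using Hgrp_carrier[OF assms] by (simp add: assoc_mult_mat_7 kmat_involution_left)
  thus ?thesis
    using root_permutation.conj_Hgrp[OF root_permutation_A_inv_k2 kmat_conj_Hgrp[OF _ assms]] by simp
qed

theorem lemma8p3:
  shows "A \<in> carrier Gamma6 \<and>
         (\<lambda>h. A \<otimes>\<^bsub>Gamma6\<^esub> h \<otimes>\<^bsub>Gamma6\<^esub> inv\<^bsub>Gamma6\<^esub> A) ` Hgrp = Hgrp"
proof
  show "A \<in> carrier Gamma6" using A_in_Gamma6_set by (simp add: Gamma6_def)
  have "inv\<^bsub>Gamma6\<^esub> A = A_inv"
    using Gamma6_inv_eq A_in_Gamma6_set A_mult_A_inv by simp
  moreover have "(\<lambda>h. A * h * A_inv) ` Hgrp = Hgrp"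
    using Hgrp_carrier A_conj_Hgrp A_inv_conj_Hgrp A_mult_A_inv
    by (intro conj_image_eq A_carrier A_inv_carrier) auto
  ultimately show "(\<lambda>h. A \<otimes>\<^bsub>Gamma6\<^esub> h \<otimes>\<^bsub>Gamma6\<^esub> inv\<^bsub>Gamma6\<^esub> A) ` Hgrp = Hgrp"
    by (simp add: Gamma6_def)
qed

end
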